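(* (i) For every number $N\ge 2$ of qubits, there is no unextendible product basis of $(\mathbb{C}^2)^{\otimes N}$ that is unextendible across every bipartition. (ii) For $N\ge 3$ qubits, there exists an unextendible entangled basis of $(\mathbb{C}^2)^{\otimes N}$, consisting of genuinely multipartite entangled states, whose unextendibility is conserved across every bipartition.
   Context: Consider $N$ qubits held by $N$ parties. A bipartition is a split of the parties into two nonempty groups, viewing the space as a bipartite space $\mathbb{C}^{2^{k}}\otimes\mathbb{C}^{2^{N-k}}$. An unextendible product basis (UPB) is a set of mutually orthogonal fully product pure states spanning a proper subspace whose orthogonal complement contains no fully product state; it is unextendible across every bipartition if, for every bipartition, the orthogonal complement contains no pure state that is a product state with respect to that bipartition. An unextendible entangled basis (UEB) is a set of mutually orthogonal pure entangled states spanning a proper subspace; its unextendibility is conserved across every bipartition if, for every bipartition, the orthogonal complement of its span contains no pure state that is entangled with respect to that bipartition (equivalently, every pure state in the complement is fully separable). A pure state is genuinely multipartite entangled if it is not a product state with respect to any bipartition. *)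

theory Defs
  imports Complex_Main
begin

text \<open>Computational basis states are indexed by subsets x of {0..<N}
 (the set of qubits in state 1). A vector of (C^2)^{\<otimes>N} is a function
 nat set \<Rightarrow> complex vanishing outside Pow {0..<N}. A pure state is a nonzero
 such vector (normalisation is irrelevant for all notions below).\<close>

definition qvec :: "nat \<Rightarrow> (nat set \<Rightarrow> complex) \<Rightarrow> bool" where
  "qvec N v \<longleftrightarrow> (\<forall>x. \<not> x \<subseteq> {0..<N} \<longrightarrow> v x = 0)"

definition qstate :: "nat \<Rightarrow> (nat set \<Rightarrow> complex) \<Rightarrow> bool" where
  "qstate N v \<longleftrightarrow> qvec N v \<and> v \<noteq> (\<lambda>_. 0)"

definition qinner :: "nat \<Rightarrow> (nat set \<Rightarrow> complex) \<Rightarrow> (nat set \<Rightarrow> complex) \<Rightarrow> complex" where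
  "qinner N u v = (\<Sum>x\<in>Pow {0..<N}. cnj (u x) * v x)"

definition orth_states :: "nat \<Rightarrow> (nat set \<Rightarrow> complex) set \<Rightarrow> bool" where
  "orth_states N B \<longleftrightarrow> (\<forall>v\<in>B. qstate N v) \<and> (\<forall>u\<in>B. \<forall>v\<in>B. u \<noteq> v \<longrightarrow> qinner N u v = 0)"

definition qspan :: "(nat set \<Rightarrow> complex) set \<Rightarrow> (nat set \<Rightarrow> complex) set" where
  "qspan B = {w. \<exists>F c. finite F \<and> F \<subseteq> B \<and> w = (\<lambda>x. \<Sum>b\<in>F. c b * b x)}"

definition spans_proper :: "nat \<Rightarrow> (nat set \<Rightarrow> complex) set \<Rightarrow> bool" where
  "spans_proper N B \<longleftrightarrow> (\<exists>w. qvec N w \<and> w \<notin> qspan B)"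

definition orth_compl :: "nat \<Rightarrow> (nat set \<Rightarrow> complex) set \<Rightarrow> (nat set \<Rightarrow> complex) set" where
  "orth_compl N B = {w. qvec N w \<and> (\<forall>b\<in>B. qinner N b w = 0)}"

definition fully_product :: "nat \<Rightarrow> (nat set \<Rightarrow> complex) \<Rightarrow> bool" where
  "fully_product N v \<longleftrightarrow> qstate N v \<and>
     (\<exists>f :: nat \<Rightarrow> bool \<Rightarrow> complex. \<forall>x. x \<subseteq> {0..<N} \<longrightarrow> v x = (\<Prod>i<N. f i (i \<in> x)))"

definition entangled :: "nat \<Rightarrow> (nat set \<Rightarrow> complex) \<Rightarrow> bool" where
  "entangled N v \<longleftrightarrow> qstate N v \<and> \<not> fully_product N v"

definition bipartition :: "nat \<Rightarrow> nat set \<Rightarrow> bool" where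
  "bipartition N S \<longleftrightarrow> S \<subseteq> {0..<N} \<and> S \<noteq> {} \<and> S \<noteq> {0..<N}"

definition product_across :: "nat \<Rightarrow> nat set \<Rightarrow> (nat set \<Rightarrow> complex) \<Rightarrow> bool" where
  "product_across N S v \<longleftrightarrow> qstate N v \<and>
     (\<exists>a b :: nat set \<Rightarrow> complex. \<forall>x. x \<subseteq> {0..<N} \<longrightarrow> v x = a (x \<inter> S) * b (x - S))"

definition entangled_across :: "nat \<Rightarrow> nat set \<Rightarrow> (nat set \<Rightarrow> complex) \<Rightarrow> bool" where
  "entangled_across N S v \<longleftrightarrow> qstate N v \<and> \<not> product_across N S v"

definition GME :: "nat \<Rightarrow> (nat set \<Rightarrow> complex) \<Rightarrow> bool" where
  "GME N v \<longleftrightarrow> qstate N v \<and> (\<forall>S. bipartition N S \<longrightarrow> \<not> product_across N S v)"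

definition UPB :: "nat \<Rightarrow> (nat set \<Rightarrow> complex) set \<Rightarrow> bool" where
  "UPB N B \<longleftrightarrow> orth_states N B \<and> (\<forall>v\<in>B. fully_product N v) \<and> spans_proper N B \<and>
     (\<forall>w\<in>orth_compl N B. \<not> fully_product N w)"

definition UPB_unext_all_bipartitions :: "nat \<Rightarrow> (nat set \<Rightarrow> complex) set \<Rightarrow> bool" where
  "UPB_unext_all_bipartitions N B \<longleftrightarrow>
     (\<forall>S. bipartition N S \<longrightarrow> (\<forall>w\<in>orth_compl N B. \<not> product_across N S w))"

definition UEB :: "nat \<Rightarrow> (nat set \<Rightarrow> complex) set \<Rightarrow> bool" where
  "UEB N B \<longleftrightarrow> orth_states N B \<and> (\<forall>v\<in>B. entangled N v) \<and> spans_proper N B \<and>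
     (\<forall>w\<in>orth_compl N B. \<not> entangled N w)"

definition UEB_conserved_all_bipartitions :: "nat \<Rightarrow> (nat set \<Rightarrow> complex) set \<Rightarrow> bool" where
  "UEB_conserved_all_bipartitions N B \<longleftrightarrow>
     (\<forall>S. bipartition N S \<longrightarrow> (\<forall>w\<in>orth_compl N B. \<not> entangled_across N S w))"

end

theory Submission
  imports Defs "HOL-Library.Function_Algebras"
begin

text \<open>
  (i) Across the cut between qubit 0 and the other qubits, every member of a UPB is a product
  vector of \<open>\<complex>\<^sup>2 \<otimes> \<complex>\<^sup>n\<close>, and an orthogonal family of product vectors \<open>a\<^sub>i \<otimes> b\<^sub>i\<close> there
  whose span is proper always has a product vector orthogonal to it. Fix a member \<open>v\<close>. The
  members whose qubit factor is orthogonal to \<open>a\<^sub>v\<close> have qubit factors parallel to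
  \<open>a\<^sub>v\<^sup>\<bottom>\<close>, so their second factors are pairwise orthogonal. If \<open>b\<^sub>v\<close> is not in the span of
  these second factors, then \<open>a\<^sub>v\<^sup>\<bottom>\<close> tensored with the component of \<open>b\<^sub>v\<close> orthogonal to that
  span is orthogonal to every member. If this fails for every \<open>v\<close>, then for any nonzero
  vector of the complement both of its slices along qubit 0 are orthogonal to every \<open>b\<^sub>i\<close>, and
  a nonzero slice tensored with the corresponding basis vector of the qubit is the required
  product vector.

  (ii) For \<open>N \<ge> 2\<close> take the GHZ-type states \<open>|x\<rangle> \<plusminus> |x\<^sup>c\<rangle>\<close> over the complementary pairs of
  basis states, except for the pairs of \<open>|0\<dots>0\<rangle>\<close> and of \<open>|{1}\<rangle>\<close>, together with three orthogonal
  real combinations of \<open>|1\<dots>1\<rangle>\<close>, \<open>|{1}\<rangle>\<close> and \<open>|{1}\<^sup>c\<rangle>\<close>. Every state is supported on a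
  complementary pair plus at most one further point, which makes it genuinely multipartite
  entangled, and the orthogonal complement of their span is spanned by the product state
  \<open>|0\<dots>0\<rangle>\<close>.
\<close>

section \<open>Inner products on a finite domain\<close>

definition inner_on :: "'a set \<Rightarrow> ('a \<Rightarrow> complex) \<Rightarrow> ('a \<Rightarrow> complex) \<Rightarrow> complex" where
  "inner_on D u v = (\<Sum>x\<in>D. cnj (u x) * v x)"

lemma qinner_eq_inner_on: "qinner N u v = inner_on (Pow {0..<N}) u v"
  by (simp add: qinner_def inner_on_def)

lemma inner_on_cong:
  "(\<And>x. x \<in> D \<Longrightarrow> u x = u' x) \<Longrightarrow> (\<And>x. x \<in> D \<Longrightarrow> v x = v' x) \<Longrightarrow> inner_on D u v = inner_on D u' v'"
  unfolding inner_on_def by (auto intro: sum.cong)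

lemma inner_on_commute: "inner_on D v u = cnj (inner_on D u v)"
  by (simp add: inner_on_def mult.commute)

lemma inner_on_scale_left: "inner_on D (\<lambda>x. c * u x) v = cnj c * inner_on D u v"
  unfolding inner_on_def by (simp add: sum_distrib_left mult_ac)

lemma inner_on_scale_right: "inner_on D u (\<lambda>x. c * v x) = c * inner_on D u v"
  unfolding inner_on_def by (simp add: sum_distrib_left mult_ac)

lemma inner_on_diff_right: "inner_on D u (\<lambda>x. v x - v' x) = inner_on D u v - inner_on D u v'"
  unfolding inner_on_def by (simp add: algebra_simps sum_subtractf)

lemma inner_on_add_left: "inner_on D (\<lambda>x. u x + u' x) v = inner_on D u v + inner_on D u' v"
  unfolding inner_on_def by (simp add: algebra_simps sum.distrib)

lemma inner_on_sum_left:
  "inner_on D (\<lambda>x. \<Sum>j\<in>F. c j * g j x) v = (\<Sum>j\<in>F. cnj (c j) * inner_on D (g j) v)"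
  unfolding inner_on_def by (simp add: sum_distrib_left sum_distrib_right mult_ac sum.swap[of _ D])

lemma inner_on_sum_right:
  "inner_on D u (\<lambda>x. \<Sum>j\<in>F. c j * g j x) = (\<Sum>j\<in>F. c j * inner_on D u (g j))"
  unfolding inner_on_def by (simp add: sum_distrib_left sum_distrib_right mult_ac sum.swap[of _ D])

lemma inner_on_self_eq_0_iff:
  assumes "finite D"
  shows "inner_on D u u = 0 \<longleftrightarrow> (\<forall>x\<in>D. u x = 0)"
proof -
  have "cnj z * z = of_real ((cmod z)\<^sup>2)" for z
    by (metis complex_norm_square mult.commute)
  then have "inner_on D u u = of_real (\<Sum>x\<in>D. (cmod (u x))\<^sup>2)"
    by (simp add: inner_on_def)
  then have "inner_on D u u = 0 \<longleftrightarrow> (\<Sum>x\<in>D. (cmod (u x))\<^sup>2) = 0"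
    by (simp only: of_real_eq_0_iff)
  then show ?thesis
    using assms by (simp add: sum_nonneg_eq_0_iff)
qed

lemma inner_on_orthogonal_sum:
  assumes "finite F" "i \<in> F" "\<And>j. j \<in> F \<Longrightarrow> j \<noteq> i \<Longrightarrow> inner_on D u (g j) = 0"
  shows "inner_on D u (\<lambda>x. \<Sum>j\<in>F. c j * g j x) = c i * inner_on D u (g i)"
  unfolding inner_on_sum_right using assms by (simp add: sum.remove sum.neutral)

definition tensor :: "('a \<Rightarrow> complex) \<Rightarrow> ('b \<Rightarrow> complex) \<Rightarrow> 'a \<times> 'b \<Rightarrow> complex" where
  "tensor a b = (\<lambda>(s, y). a s * b y)"

lemma inner_on_tensor_left:
  "inner_on (A \<times> B) (tensor a b) w = inner_on A a (\<lambda>s. inner_on B b (\<lambda>y. w (s, y)))"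
  unfolding inner_on_def tensor_def
  by (simp add: sum.cartesian_product' sum_distrib_left mult_ac)

lemma inner_on_tensor:
  "inner_on (A \<times> B) (tensor a b) (tensor a' b') = inner_on A a a' * inner_on B b b'"
  unfolding inner_on_tensor_left
  by (simp add: tensor_def inner_on_def sum_product sum_distrib_left mult_ac sum.swap[of _ B])

lemma inner_on_bool: "inner_on UNIV a b = cnj (a False) * b False + cnj (a True) * b True"
  by (simp add: inner_on_def UNIV_bool)

definition proj_residual :: "'a set \<Rightarrow> ('i \<Rightarrow> 'a \<Rightarrow> complex) \<Rightarrow> 'i set \<Rightarrow> ('a \<Rightarrow> complex) \<Rightarrow> 'a \<Rightarrow> complex" where
  "proj_residual D g F w = (\<lambda>x. w x - (\<Sum>j\<in>F. inner_on D (g j) w / inner_on D (g j) (g j) * g j x))"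

lemma inner_on_proj_residual_mem:
  assumes "finite F" "i \<in> F" "inner_on D (g i) (g i) \<noteq> 0"
    and "\<And>j. j \<in> F \<Longrightarrow> j \<noteq> i \<Longrightarrow> inner_on D (g i) (g j) = 0"
  shows "inner_on D (g i) (proj_residual D g F w) = 0"
  using assms(3) inner_on_orthogonal_sum[OF assms(1,2,4),
      where c = "\<lambda>j. inner_on D (g j) w / inner_on D (g j) (g j)"]
  by (simp add: proj_residual_def inner_on_diff_right)

lemma inner_on_proj_residual_orthogonal:
  assumes "inner_on D u w = 0" "\<And>j. j \<in> F \<Longrightarrow> inner_on D u (g j) = 0"
  shows "inner_on D u (proj_residual D g F w) = 0"
  unfolding proj_residual_def inner_on_diff_right inner_on_sum_right using assms by simp

section \<open>Orthogonal product vectors in \<open>\<complex>\<^sup>2 \<otimes> \<complex>\<^sup>R\<close>\<close>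

definition qubit_perp :: "(bool \<Rightarrow> complex) \<Rightarrow> bool \<Rightarrow> complex" where
  "qubit_perp a t = (if t then cnj (a False) else - cnj (a True))"

lemma inner_on_qubit_perp: "inner_on UNIV a (qubit_perp a) = 0"
  by (simp add: inner_on_bool qubit_perp_def)

lemma inner_on_qubit_perp_self: "inner_on UNIV (qubit_perp a) (qubit_perp a) = inner_on UNIV a a"
  by (simp add: inner_on_bool qubit_perp_def mult.commute)

lemma qubit_orthogonal_eq_perp:
  assumes "inner_on UNIV a a \<noteq> 0" "inner_on UNIV c a = 0"
  obtains k where "c = (\<lambda>t. k * qubit_perp a t)"
proof -
  have orth: "c False * cnj (a False) + c True * cnj (a True) = 0"
    using arg_cong[OF assms(2), of cnj] by (simp add: inner_on_bool)
  show ?thesis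
  proof (cases "a False = 0")
    case True
    then have "a True \<noteq> 0" "c True = 0"
      using assms(1) orth by (auto simp: inner_on_bool)
    with True show ?thesis
      by (intro that[of "- c False / cnj (a True)"]) (auto simp: fun_eq_iff qubit_perp_def)
  next
    case False
    then have "c False = - c True * cnj (a True) / cnj (a False)"
      using orth by (simp add: field_simps add_eq_0_iff)
    with False show ?thesis
      by (intro that[of "c True / cnj (a False)"]) (auto simp: fun_eq_iff qubit_perp_def)
  qed
qed

lemma qubit_orthogonal_to_perp_pair:
  assumes "inner_on UNIV a a \<noteq> 0" "inner_on UNIV a z = 0" "inner_on UNIV (qubit_perp a) z = 0"
  shows "z t = 0"
proof -
  have "inner_on UNIV z a = 0"
    using assms(2) by (simp add: inner_on_commute[of _ z])
  then obtain k where k: "z = (\<lambda>t. k * qubit_perp a t)"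
    using qubit_orthogonal_eq_perp assms(1) by blast
  then have "k * inner_on UNIV a a = 0"
    using assms(3) by (simp add: inner_on_scale_right inner_on_qubit_perp_self)
  with assms(1) k show ?thesis by simp
qed

definition perp_block :: "'i set \<Rightarrow> ('i \<Rightarrow> bool \<Rightarrow> complex) \<Rightarrow> 'i \<Rightarrow> 'i set" where
  "perp_block I a v = {j \<in> I. inner_on UNIV (a j) (a v) = 0}"

context
  fixes I :: "'i set" and R :: "'r set"
    and a :: "'i \<Rightarrow> bool \<Rightarrow> complex" and b :: "'i \<Rightarrow> 'r \<Rightarrow> complex"
  assumes finite_I: "finite I" and finite_R: "finite R"
    and a_nonzero: "\<And>i. i \<in> I \<Longrightarrow> inner_on UNIV (a i) (a i) \<noteq> 0"
    and b_nonzero: "\<And>i. i \<in> I \<Longrightarrow> inner_on R (b i) (b i) \<noteq> 0"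
    and orthogonal: "\<And>i j. i \<in> I \<Longrightarrow> j \<in> I \<Longrightarrow> i \<noteq> j \<Longrightarrow>
                       inner_on UNIV (a i) (a j) * inner_on R (b i) (b j) = 0"
begin

lemma perp_block_eq_perp:
  assumes "v \<in> I" "j \<in> perp_block I a v"
  obtains k where "k \<noteq> 0" "a j = (\<lambda>t. k * qubit_perp (a v) t)"
proof -
  have j: "j \<in> I" "inner_on UNIV (a j) (a v) = 0"
    using assms(2) by (simp_all add: perp_block_def)
  then obtain k where k: "a j = (\<lambda>t. k * qubit_perp (a v) t)"
    using qubit_orthogonal_eq_perp[OF a_nonzero[OF assms(1)]] by blast
  moreover have "k \<noteq> 0"
  proof
    assume "k = 0"
    then have "inner_on UNIV (a j) (a j) = 0"
      by (simp add: k inner_on_def)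
    with a_nonzero j(1) show False by blast
  qed
  ultimately show ?thesis using that by blast
qed

lemma inner_on_perp_block:
  assumes "i \<in> I" "v \<in> I" "inner_on UNIV (a i) (qubit_perp (a v)) \<noteq> 0"
    and "j \<in> perp_block I a v" "j \<noteq> i"
  shows "inner_on R (b i) (b j) = 0"
proof -
  obtain k where "k \<noteq> 0" "a j = (\<lambda>t. k * qubit_perp (a v) t)"
    using perp_block_eq_perp assms(2,4) by blast
  then have "inner_on UNIV (a i) (a j) \<noteq> 0"
    using assms(3) by (simp add: inner_on_scale_right)
  moreover have "j \<in> I"
    using assms(4) by (simp add: perp_block_def)
  ultimately show ?thesis
    using orthogonal[OF assms(1) \<open>j \<in> I\<close>] assms(5) by auto
qed

lemma tensor_perp_residual_orthogonal:
  assumes "i \<in> I" "v \<in> I"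
  shows "inner_on UNIV (a i) (qubit_perp (a v))
           * inner_on R (b i) (proj_residual R b (perp_block I a v) (b v)) = 0"
proof (cases "inner_on UNIV (a i) (qubit_perp (a v)) = 0")
  case False
  have finite_block: "finite (perp_block I a v)"
    using finite_I by (simp add: perp_block_def)
  have "inner_on R (b i) (proj_residual R b (perp_block I a v) (b v)) = 0"
  proof (cases "i \<in> perp_block I a v")
    case True
    show ?thesis
      by (rule inner_on_proj_residual_mem[where g = b, OF finite_block True b_nonzero[OF assms(1)]])
        (rule inner_on_perp_block[OF assms False])
  next
    case not_in_block: False
    have "i \<noteq> v"
      using False inner_on_qubit_perp by auto
    moreover have "inner_on UNIV (a i) (a v) \<noteq> 0"
      using not_in_block assms(1) by (simp add: perp_block_def)
    ultimately have "inner_on R (b i) (b v) = 0"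
      using orthogonal[OF assms] by simp
    moreover have "inner_on R (b i) (b j) = 0" if "j \<in> perp_block I a v" for j
      using inner_on_perp_block[OF assms False that] that not_in_block by blast
    ultimately show ?thesis
      by (rule inner_on_proj_residual_orthogonal)
  qed
  then show ?thesis by simp
qed simp

lemma orthogonal_slices_if_residuals_vanish:
  assumes residuals: "\<And>v y. v \<in> I \<Longrightarrow> y \<in> R \<Longrightarrow> proj_residual R b (perp_block I a v) (b v) y = 0"
    and w_orth: "\<And>i. i \<in> I \<Longrightarrow> inner_on (UNIV \<times> R) (tensor (a i) (b i)) w = 0"
    and "v \<in> I"
  shows "inner_on R (b v) (\<lambda>y. w (t, y)) = 0"
proof -
  define z where "z i = (\<lambda>s. inner_on R (b i) (\<lambda>y. w (s, y)))" for i
  define coeff where "coeff j = inner_on R (b j) (b v) / inner_on R (b j) (b j)" for j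
  have z_orth: "inner_on UNIV (a i) (z i) = 0" if "i \<in> I" for i
    using w_orth[OF that] by (simp add: inner_on_tensor_left z_def)
  have "inner_on UNIV (qubit_perp (a v)) (z j) = 0" if j: "j \<in> perp_block I a v" for j
  proof -
    obtain k where "k \<noteq> 0" "a j = (\<lambda>t. k * qubit_perp (a v) t)"
      using perp_block_eq_perp \<open>v \<in> I\<close> j by blast
    with z_orth[of j] j show ?thesis
      by (simp add: inner_on_scale_left perp_block_def)
  qed
  moreover have "z v = (\<lambda>s. \<Sum>j\<in>perp_block I a v. cnj (coeff j) * z j s)"
  proof
    fix s
    have "z v s = inner_on R (\<lambda>y. \<Sum>j\<in>perp_block I a v. coeff j * b j y) (\<lambda>y. w (s, y))"
      unfolding z_def using residuals[OF \<open>v \<in> I\<close>]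
      by (intro inner_on_cong) (simp_all add: proj_residual_def coeff_def)
    then show "z v s = (\<Sum>j\<in>perp_block I a v. cnj (coeff j) * z j s)"
      by (simp add: inner_on_sum_left z_def)
  qed
  ultimately have "inner_on UNIV (qubit_perp (a v)) (z v) = 0"
    by (simp add: inner_on_sum_right)
  from qubit_orthogonal_to_perp_pair[OF a_nonzero[OF \<open>v \<in> I\<close>] z_orth[OF \<open>v \<in> I\<close>] this]
  show ?thesis by (simp add: z_def)
qed

lemma orthogonal_complement_has_tensor:
  assumes w_orth: "\<And>i. i \<in> I \<Longrightarrow> inner_on (UNIV \<times> R) (tensor (a i) (b i)) w = 0"
    and w_nonzero: "inner_on (UNIV \<times> R) w w \<noteq> 0"
  obtains c y where "inner_on UNIV c c \<noteq> 0" "inner_on R y y \<noteq> 0"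
    "\<And>i. i \<in> I \<Longrightarrow> inner_on UNIV (a i) c * inner_on R (b i) y = 0"
proof (cases "\<exists>v\<in>I. \<exists>y\<in>R. proj_residual R b (perp_block I a v) (b v) y \<noteq> 0")
  case True
  then obtain v where v: "v \<in> I"
    and residual: "inner_on R (proj_residual R b (perp_block I a v) (b v))
                     (proj_residual R b (perp_block I a v) (b v)) \<noteq> 0"
    using inner_on_self_eq_0_iff[OF finite_R] by blast
  show ?thesis
  proof (rule that[of "qubit_perp (a v)" "proj_residual R b (perp_block I a v) (b v)"])
    show "inner_on UNIV (qubit_perp (a v)) (qubit_perp (a v)) \<noteq> 0"
      using a_nonzero[OF v] by (simp add: inner_on_qubit_perp_self)
  qed (fact residual, fact tensor_perp_residual_orthogonal[OF _ v])
next
  case False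
  then have residuals: "\<And>v y. v \<in> I \<Longrightarrow> y \<in> R \<Longrightarrow> proj_residual R b (perp_block I a v) (b v) y = 0"
    by blast
  have "finite ((UNIV :: bool set) \<times> R)"
    using finite_R by simp
  from inner_on_self_eq_0_iff[OF this, of w] w_nonzero
  obtain t y0 where "y0 \<in> R" "w (t, y0) \<noteq> 0"
    by auto
  then have slice: "inner_on R (\<lambda>y. w (t, y)) (\<lambda>y. w (t, y)) \<noteq> 0"
    using inner_on_self_eq_0_iff[OF finite_R, of "\<lambda>y. w (t, y)"] by auto
  show ?thesis
  proof (rule that[of "\<lambda>s. if s = t then 1 else 0" "\<lambda>y. w (t, y)"])
    show "inner_on UNIV (\<lambda>s. if s = t then 1 else 0) (\<lambda>s. if s = t then 1 else 0) \<noteq> 0"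
      by (cases t) (simp_all add: inner_on_bool)
    show "inner_on UNIV (a i) (\<lambda>s. if s = t then 1 else 0) * inner_on R (b i) (\<lambda>y. w (t, y)) = 0"
      if "i \<in> I" for i
      using orthogonal_slices_if_residuals_vanish[OF residuals w_orth that] by simp
  qed (fact slice)
qed

end

section \<open>Vectors of \<open>N\<close> qubits\<close>

definition ket :: "nat set \<Rightarrow> nat set \<Rightarrow> complex" where
  "ket y = (\<lambda>x. if x = y then 1 else 0)"

lemma sum_fun_apply: "(\<Sum>b\<in>F. f b) x = (\<Sum>b\<in>F. f b x)"
  by (induction F rule: infinite_finite_induct) auto

lemma qvec_eq_sum_ket:
  assumes "qvec N v"
  shows "v x = (\<Sum>y\<in>Pow {0..<N}. v y * ket y x)"
proof -
  have "(\<Sum>y\<in>Pow {0..<N}. v y * ket y x) = (\<Sum>y\<in>Pow {0..<N}. if y = x then v x else 0)"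
    by (rule sum.cong) (auto simp: ket_def)
  then show ?thesis
    using assms by (simp add: qvec_def)
qed

lemma qvec_ket: "y \<subseteq> {0..<N} \<Longrightarrow> qvec N (ket y)"
  by (auto simp: qvec_def ket_def)

lemma qvec_add: "qvec N u \<Longrightarrow> qvec N v \<Longrightarrow> qvec N (\<lambda>x. u x + v x)"
  by (simp add: qvec_def)

lemma qvec_scale: "qvec N u \<Longrightarrow> qvec N (\<lambda>x. c * u x)"
  by (simp add: qvec_def)

lemma qvec_proj_residual:
  assumes "qvec N v" "\<And>j. j \<in> F \<Longrightarrow> qvec N (g j)"
  shows "qvec N (proj_residual D g F v)"
  unfolding qvec_def
proof (intro allI impI)
  fix x assume x: "\<not> x \<subseteq> {0..<N}"
  then have "g j x = 0" if "j \<in> F" for j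
    using assms(2)[OF that] by (simp add: qvec_def)
  then show "proj_residual D g F v x = 0"
    using assms(1) x by (simp add: proj_residual_def qvec_def)
qed

lemma qinner_ket:
  assumes "y \<subseteq> {0..<N}"
  shows "qinner N (ket y) w = w y"
proof -
  have "qinner N (ket y) w = (\<Sum>z\<in>Pow {0..<N}. if z = y then w y else 0)"
    unfolding qinner_def by (rule sum.cong) (simp_all add: ket_def)
  with assms show ?thesis
    by simp
qed

lemma qstate_iff_qinner_self: "qstate N v \<longleftrightarrow> qvec N v \<and> qinner N v v \<noteq> 0"
  by (auto simp: qstate_def qvec_def qinner_eq_inner_on inner_on_self_eq_0_iff fun_eq_iff)

lemma orth_states_qinner_self:
  "orth_states N B \<Longrightarrow> v \<in> B \<Longrightarrow> qinner N v v \<noteq> 0"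
  by (simp add: orth_states_def qstate_iff_qinner_self)

interpretation cfun: vector_space "\<lambda>(c::complex) (f::nat set \<Rightarrow> complex) x. c * f x"
  by unfold_locales (auto simp: fun_eq_iff algebra_simps)

lemma orth_states_finite:
  assumes "orth_states N B"
  shows "finite B"
proof -
  have "B \<subseteq> cfun.span (ket ` Pow {0..<N})"
  proof
    fix v assume "v \<in> B"
    then have "v = (\<Sum>y\<in>Pow {0..<N}. (\<lambda>x. v y * ket y x))"
      using assms qvec_eq_sum_ket by (simp add: orth_states_def qstate_def fun_eq_iff sum_fun_apply)
    also have "\<dots> \<in> cfun.span (ket ` Pow {0..<N})"
      by (intro cfun.span_sum cfun.span_scale cfun.span_base) simp
    finally show "v \<in> cfun.span (ket ` Pow {0..<N})" .
  qed
  moreover have "cfun.independent B"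
    unfolding cfun.independent_explicit_module
  proof (intro allI impI)
    fix F u v
    assume F: "finite F" "F \<subseteq> B" and zero: "(\<Sum>v\<in>F. (\<lambda>x. u v * v x)) = 0" and "v \<in> F"
    have "qinner N v b = 0" if "b \<in> F" "b \<noteq> v" for b
      using assms F(2) \<open>v \<in> F\<close> that unfolding orth_states_def by (metis subsetD)
    then have "qinner N v (\<lambda>x. \<Sum>b\<in>F. u b * b x) = u v * qinner N v v"
      unfolding qinner_eq_inner_on by (rule inner_on_orthogonal_sum[OF F(1) \<open>v \<in> F\<close>])
    moreover have "(\<lambda>x. \<Sum>b\<in>F. u b * b x) = (\<lambda>_. 0)"
      using zero by (simp add: fun_eq_iff sum_fun_apply)
    ultimately have "u v * qinner N v v = 0"
      by (simp add: qinner_def)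
    then show "u v = 0"
      using orth_states_qinner_self[OF assms] F \<open>v \<in> F\<close> by auto
  qed
  ultimately show ?thesis
    using cfun.independent_span_bound[of "ket ` Pow {0..<N}"] by simp
qed

lemma orth_compl_has_qstate:
  assumes "orth_states N B" "spans_proper N B"
  obtains w where "w \<in> orth_compl N B" "qstate N w"
proof -
  obtain v where v: "qvec N v" "v \<notin> qspan B"
    using assms(2) by (auto simp: spans_proper_def)
  define w where "w = proj_residual (Pow {0..<N}) id B v"
  have finite_B: "finite B"
    by (rule orth_states_finite[OF assms(1)])
  have "qinner N u w = 0" if "u \<in> B" for u
    unfolding w_def qinner_eq_inner_on
    by (rule inner_on_proj_residual_mem[where g = id, simplified, OF finite_B that])
      (use assms(1) that in \<open>simp_all add: orth_states_def orth_states_qinner_self flip: qinner_eq_inner_on\<close>)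
  moreover have "qvec N w"
    unfolding w_def using v(1) assms(1)
    by (intro qvec_proj_residual) (simp_all add: orth_states_def qstate_def)
  moreover have "w \<noteq> (\<lambda>_. 0)"
  proof
    assume "w = (\<lambda>_. 0)"
    then have "w x = 0" for x
      by simp
    then have "v = (\<lambda>x. \<Sum>b\<in>B. qinner N b v / qinner N b b * b x)"
      unfolding w_def proj_residual_def qinner_eq_inner_on by (simp add: fun_eq_iff)
    then have "v \<in> qspan B"
      unfolding qspan_def using finite_B
      by (intro CollectI exI[of _ B] exI[of _ "\<lambda>b. qinner N b v / qinner N b b"]) simp
    with v(2) show False ..
  qed
  ultimately show ?thesis
    by (intro that) (simp_all add: orth_compl_def qstate_def)
qed

section \<open>Product states across bipartitions\<close>

lemma fully_product_imp_product_across: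
  assumes "fully_product N v"
  shows "product_across N S v"
proof -
  obtain f :: "nat \<Rightarrow> bool \<Rightarrow> complex" where f: "\<And>x. x \<subseteq> {0..<N} \<Longrightarrow> v x = (\<Prod>i<N. f i (i \<in> x))"
    using assms by (auto simp: fully_product_def)
  define a where "a s = (\<Prod>i\<in>{..<N} \<inter> S. f i (i \<in> s))" for s
  define b where "b s = (\<Prod>i\<in>{..<N} - S. f i (i \<in> s))" for s
  have "v x = a (x \<inter> S) * b (x - S)" if "x \<subseteq> {0..<N}" for x
  proof -
    have "v x = (\<Prod>i\<in>{..<N} \<inter> S. f i (i \<in> x)) * (\<Prod>i\<in>{..<N} - S. f i (i \<in> x))"
      using f[OF that] prod.Int_Diff[of "{..<N}" _ S] by simp
    also have "\<dots> = a (x \<inter> S) * b (x - S)"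
      unfolding a_def b_def by (intro arg_cong2[where f = "(*)"] prod.cong) auto
    finally show ?thesis .
  qed
  with assms show ?thesis
    unfolding product_across_def fully_product_def by (intro conjI exI[of _ a] exI[of _ b]) auto
qed

lemma bipartition_first_qubit:
  fixes N :: nat
  assumes "2 \<le> N"
  shows "bipartition N {0}"
proof -
  have "1 \<in> {0..<N}" "1 \<notin> {0::nat}"
    using assms by simp_all
  then have "{0} \<noteq> {0..<N}"
    by metis
  with assms show ?thesis
    by (simp add: bipartition_def)
qed

lemma GME_imp_entangled:
  assumes "2 \<le> N" "GME N v"
  shows "entangled N v"
  using assms fully_product_imp_product_across bipartition_first_qubit[OF assms(1)]
  by (auto simp: GME_def entangled_def)

lemma not_product_across_antipodal_support:
  fixes v :: "nat set \<Rightarrow> complex"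
  assumes x: "x \<subseteq> {0..<N}" and vx: "v x \<noteq> 0" and vc: "v ({0..<N} - x) \<noteq> 0"
    and supp: "\<And>y. y \<subseteq> {0..<N} \<Longrightarrow> y \<noteq> x \<Longrightarrow> y \<noteq> {0..<N} - x \<Longrightarrow> y \<noteq> e \<Longrightarrow> v y = 0"
    and S: "bipartition N S"
  shows "\<not> product_across N S v"
proof
  assume "product_across N S v"
  then obtain a b where ab: "\<And>y. y \<subseteq> {0..<N} \<Longrightarrow> v y = a (y \<inter> S) * b (y - S)"
    by (auto simp: product_across_def)
  define c where "c = {0..<N} - x"
  have S1: "S \<subseteq> {0..<N}" "S \<noteq> {}" "S \<noteq> {0..<N}"
    using S by (auto simp: bipartition_def)
  obtain i where i: "i \<in> S"
    using S1 by auto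
  obtain j where j: "j \<in> {0..<N}" "j \<notin> S"
    using S1(1,3) by blast
  (* Exchanging the S-parts of x and of its complement c gives two further points y1, y2 with
     v y1 * v y2 = v x * v c, which would both have to lie in the support. *)
  define y1 where "y1 = (x \<inter> S) \<union> (c - S)"
  define y2 where "y2 = (c \<inter> S) \<union> (x - S)"
  have sub: "y1 \<subseteq> {0..<N}" "y2 \<subseteq> {0..<N}" "c \<subseteq> {0..<N}"
    using x S1 by (auto simp: y1_def y2_def c_def)
  have "y1 \<inter> S = x \<inter> S" "y1 - S = c - S" "y2 \<inter> S = c \<inter> S" "y2 - S = x - S"
    by (auto simp: y1_def y2_def c_def)
  then have "v y1 * v y2 = v x * v c"
    using ab[OF sub(1)] ab[OF sub(2)] ab[OF x] ab[OF sub(3)] by simp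
  then have nonzero: "v y1 \<noteq> 0" "v y2 \<noteq> 0"
    using vx vc by (auto simp: c_def)
  have "j \<in> y1 \<longleftrightarrow> j \<notin> x" "j \<in> c \<longleftrightarrow> j \<notin> x" "i \<in> y1 \<longleftrightarrow> i \<in> x" "i \<in> c \<longleftrightarrow> i \<notin> x"
    "i \<in> y2 \<longleftrightarrow> i \<notin> x" "j \<in> y2 \<longleftrightarrow> j \<in> x"
    using i j S1(1) by (auto simp: y1_def y2_def c_def)
  then have "y1 \<noteq> x" "y1 \<noteq> c" "y2 \<noteq> x" "y2 \<noteq> c" "y1 \<noteq> y2"
    by metis+
  then show False
    using supp[OF sub(1)] supp[OF sub(2)] nonzero by (auto simp: c_def)
qed

lemma GME_if_antipodal_support:
  assumes "qvec N v" "x \<subseteq> {0..<N}" "v x \<noteq> 0" "v ({0..<N} - x) \<noteq> 0"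
    and "\<And>y. y \<subseteq> {0..<N} \<Longrightarrow> y \<noteq> x \<Longrightarrow> y \<noteq> {0..<N} - x \<Longrightarrow> y \<noteq> e \<Longrightarrow> v y = 0"
  shows "GME N v"
  using assms not_product_across_antipodal_support[of x N v e]
  by (auto simp: GME_def qstate_def)

lemma fully_product_if_vanishes_off_empty:
  assumes "0 < N" "qstate N w" "\<And>z. z \<noteq> {} \<Longrightarrow> w z = 0"
  shows "fully_product N w"
proof -
  define f where "f i t = (if t then 0 else if i = 0 then w {} else 1)" for i :: nat and t
  have "w x = (\<Prod>i<N. f i (i \<in> x))" if "x \<subseteq> {0..<N}" for x
  proof (cases "x = {}")
    case True
    have "(\<Prod>i<N. f i (i \<in> x)) = (\<Prod>i<N. if i = 0 then w {} else 1)"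
      using True by (simp add: f_def)
    also have "\<dots> = w {}"
      using assms(1) by (simp add: prod.delta')
    finally show ?thesis
      using True by simp
  next
    case False
    then obtain i where "i \<in> x"
      by blast
    with that have "i \<in> {..<N}" "f i (i \<in> x) = 0"
      by (auto simp: f_def)
    then have "(\<Prod>i<N. f i (i \<in> x)) = 0"
      by (metis finite_lessThan prod_zero_iff)
    with False show ?thesis
      by (simp add: assms(3))
  qed
  with assms(2) show ?thesis
    unfolding fully_product_def by (intro conjI exI[of _ f]) simp_all
qed

lemma product_across_if_vanishes_off_empty:
  assumes "qstate N w" "\<And>z. z \<noteq> {} \<Longrightarrow> w z = 0"
  shows "product_across N S w"
proof -
  define a where "a s = (if s = {} then w {} else 0)" for s :: "nat set"
  define b where "b s = (if s = {} then 1 else 0 :: complex)" for s :: "nat set"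
  have "w x = a (x \<inter> S) * b (x - S)" for x
  proof (cases "x = {}")
    case False
    then have "x \<inter> S \<noteq> {} \<or> x - S \<noteq> {}"
      by blast
    then have "a (x \<inter> S) * b (x - S) = 0"
      by (auto simp: a_def b_def)
    with False show ?thesis
      by (simp add: assms(2))
  qed (simp add: a_def b_def)
  with assms(1) show ?thesis
    unfolding product_across_def by (intro conjI exI[of _ a] exI[of _ b]) simp_all
qed

section \<open>Unextendible product bases\<close>

definition qubit0_split :: "(nat set \<Rightarrow> complex) \<Rightarrow> bool \<times> nat set \<Rightarrow> complex" where
  "qubit0_split u = (\<lambda>(t, y). u (if t then insert 0 y else y))"

lemma bij_betw_qubit0_insert:
  fixes N :: nat
  assumes "0 < N"
  shows "bij_betw (\<lambda>(t, y). if t then insert 0 y else y) (UNIV \<times> Pow {1..<N}) (Pow {0..<N})"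
proof (rule bij_betw_byWitness[where f' = "\<lambda>x. (0 \<in> x, x - {0})"])
  have "0 \<notin> y" if "y \<subseteq> {1..<N}" for y
    using that by auto
  then show "\<forall>p\<in>UNIV \<times> Pow {1..<N}. (\<lambda>x. (0 \<in> x, x - {0})) ((\<lambda>(t, y). if t then insert 0 y else y) p) = p"
    by auto
  show "(\<lambda>(t, y). if t then insert 0 y else y) ` (UNIV \<times> Pow {1..<N}) \<subseteq> Pow {0..<N}"
    using assms by (auto split: if_splits)
  show "(\<lambda>x. (0 \<in> x, x - {0})) ` Pow {0..<N} \<subseteq> UNIV \<times> Pow {1..<N}"
    by auto
qed auto

lemma qinner_qubit0_split:
  assumes "0 < N"
  shows "qinner N u v = inner_on (UNIV \<times> Pow {1..<N}) (qubit0_split u) (qubit0_split v)"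
  unfolding qinner_eq_inner_on inner_on_def
  using sum.reindex_bij_betw[OF bij_betw_qubit0_insert[OF assms], of "\<lambda>x. cnj (u x) * v x"]
  by (simp add: qubit0_split_def case_prod_unfold if_distrib)

lemma product_across_first_qubit_split:
  assumes "0 < N" "product_across N {0} u"
  obtains a b where "\<And>p. p \<in> UNIV \<times> Pow {1..<N} \<Longrightarrow> qubit0_split u p = tensor a b p"
proof -
  obtain \<alpha> \<beta> where u: "\<And>x. x \<subseteq> {0..<N} \<Longrightarrow> u x = \<alpha> (x \<inter> {0}) * \<beta> (x - {0})"
    using assms(2) by (auto simp: product_across_def)
  have "qubit0_split u (t, y) = tensor (\<lambda>t. \<alpha> (if t then {0} else {})) \<beta> (t, y)"
    if "y \<subseteq> {1..<N}" for t y
  proof -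
    have "0 \<notin> y" "insert 0 y \<subseteq> {0..<N}" "y \<subseteq> {0..<N}"
      using that assms(1) by auto
    then show ?thesis
      by (cases t) (simp_all add: qubit0_split_def tensor_def u Int_insert_left)
  qed
  then show ?thesis
    using that[of "\<lambda>t. \<alpha> (if t then {0} else {})" \<beta>] by auto
qed

lemma qinner_qubit0_split_tensor_left:
  assumes "0 < N" "\<And>p. p \<in> UNIV \<times> Pow {1..<N} \<Longrightarrow> qubit0_split u p = tensor a b p"
  shows "qinner N u v = inner_on (UNIV \<times> Pow {1..<N}) (tensor a b) (qubit0_split v)"
  unfolding qinner_qubit0_split[OF assms(1)] by (rule inner_on_cong) (simp_all add: assms(2))

lemma qinner_qubit0_split_tensors:
  assumes "0 < N" "\<And>p. p \<in> UNIV \<times> Pow {1..<N} \<Longrightarrow> qubit0_split u p = tensor a b p"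
    and "\<And>p. p \<in> UNIV \<times> Pow {1..<N} \<Longrightarrow> qubit0_split v p = tensor c y p"
  shows "qinner N u v = inner_on UNIV a c * inner_on (Pow {1..<N}) b y"
proof -
  have "qinner N u v = inner_on (UNIV \<times> Pow {1..<N}) (tensor a b) (qubit0_split v)"
    by (rule qinner_qubit0_split_tensor_left[OF assms(1,2)])
  also have "\<dots> = inner_on (UNIV \<times> Pow {1..<N}) (tensor a b) (tensor c y)"
    by (rule inner_on_cong) (simp_all add: assms(3))
  finally show ?thesis
    by (simp add: inner_on_tensor)
qed

definition qubit0_tensor :: "nat \<Rightarrow> (bool \<Rightarrow> complex) \<Rightarrow> (nat set \<Rightarrow> complex) \<Rightarrow> nat set \<Rightarrow> complex" where
  "qubit0_tensor N c y x = (if x \<subseteq> {0..<N} then c (0 \<in> x) * y (x - {0}) else 0)"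

lemma qubit0_split_qubit0_tensor:
  assumes "0 < N" "p \<in> UNIV \<times> Pow {1..<N}"
  shows "qubit0_split (qubit0_tensor N c y) p = tensor c y p"
proof -
  obtain t z where p: "p = (t, z)" "z \<subseteq> {1..<N}"
    using assms(2) by auto
  then have "0 \<notin> z" "insert 0 z \<subseteq> {0..<N}" "z \<subseteq> {0..<N}"
    using assms(1) by auto
  then show ?thesis
    by (cases t) (simp_all add: p qubit0_split_def qubit0_tensor_def tensor_def)
qed

lemma qubit0_tensor_product_state:
  assumes "0 < N" "inner_on UNIV c c \<noteq> 0" "inner_on (Pow {1..<N}) y y \<noteq> 0"
  shows "qstate N (qubit0_tensor N c y)" "product_across N {0} (qubit0_tensor N c y)"
proof -
  have "qinner N (qubit0_tensor N c y) (qubit0_tensor N c y)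
      = inner_on UNIV c c * inner_on (Pow {1..<N}) y y"
    using qinner_qubit0_split_tensors[OF assms(1)] qubit0_split_qubit0_tensor[OF assms(1)] by blast
  with assms(2,3) show state: "qstate N (qubit0_tensor N c y)"
    by (simp add: qstate_iff_qinner_self qvec_def qubit0_tensor_def)
  then show "product_across N {0} (qubit0_tensor N c y)"
    unfolding product_across_def
    by (intro conjI exI[of _ "\<lambda>s. c (0 \<in> s)"] exI[of _ y]) (simp_all add: qubit0_tensor_def)
qed

lemma orth_compl_has_product_across_first_qubit:
  fixes N :: nat
  assumes "0 < N" "orth_states N B" "spans_proper N B" "\<And>u. u \<in> B \<Longrightarrow> product_across N {0} u"
  obtains w where "w \<in> orth_compl N B" "product_across N {0} w"
proof -
  let ?R = "Pow {1..<N}"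
  have "\<forall>u\<in>B. \<exists>a b. \<forall>p\<in>UNIV \<times> ?R. qubit0_split u p = tensor a b p"
    using product_across_first_qubit_split[OF assms(1) assms(4)] by metis
  then obtain a b
    where ab: "\<And>u p. u \<in> B \<Longrightarrow> p \<in> UNIV \<times> ?R \<Longrightarrow> qubit0_split u p = tensor (a u) (b u) p"
    by metis
  have qinner_tensors: "qinner N u v = inner_on UNIV (a u) (a v) * inner_on ?R (b u) (b v)"
    if "u \<in> B" "v \<in> B" for u v
    by (rule qinner_qubit0_split_tensors[OF assms(1) ab[OF that(1)] ab[OF that(2)]])
  obtain w0 where w0: "w0 \<in> orth_compl N B" "qstate N w0"
    using orth_compl_has_qstate[OF assms(2,3)] by blast
  obtain c y where cy: "inner_on UNIV c c \<noteq> 0" "inner_on ?R y y \<noteq> 0"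
    "\<And>u. u \<in> B \<Longrightarrow> inner_on UNIV (a u) c * inner_on ?R (b u) y = 0"
  proof (rule orthogonal_complement_has_tensor[of B ?R a b "qubit0_split w0"])
    show "finite B"
      by (rule orth_states_finite[OF assms(2)])
    show "inner_on UNIV (a u) (a u) \<noteq> 0" "inner_on ?R (b u) (b u) \<noteq> 0" if "u \<in> B" for u
      using orth_states_qinner_self[OF assms(2) that] qinner_tensors[OF that that] by auto
    show "inner_on UNIV (a u) (a v) * inner_on ?R (b u) (b v) = 0"
      if "u \<in> B" "v \<in> B" "u \<noteq> v" for u v
      using assms(2) that qinner_tensors[OF that(1,2)] by (simp add: orth_states_def)
    show "inner_on (UNIV \<times> ?R) (tensor (a u) (b u)) (qubit0_split w0) = 0" if "u \<in> B" for u
      using w0(1) that qinner_qubit0_split_tensor_left[OF assms(1) ab[OF that], of w0]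
      by (simp add: orth_compl_def)
    show "inner_on (UNIV \<times> ?R) (qubit0_split w0) (qubit0_split w0) \<noteq> 0"
      using w0(2) by (simp add: qstate_iff_qinner_self qinner_qubit0_split[OF assms(1)])
  qed (simp_all add: that)
  show ?thesis
  proof (rule that)
    have "qinner N u (qubit0_tensor N c y) = 0" if "u \<in> B" for u
      using qinner_qubit0_split_tensors[OF assms(1) ab[OF that] qubit0_split_qubit0_tensor[OF assms(1)]]
        cy(3)[OF that] by simp
    then show "qubit0_tensor N c y \<in> orth_compl N B"
      using qubit0_tensor_product_state(1)[OF assms(1) cy(1,2)] by (simp add: orth_compl_def qstate_def)
    show "product_across N {0} (qubit0_tensor N c y)"
      by (rule qubit0_tensor_product_state(2)[OF assms(1) cy(1,2)])
  qed
qed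

lemma UPB_not_unext_all_bipartitions:
  assumes "2 \<le> N" "UPB N B"
  shows "\<not> UPB_unext_all_bipartitions N B"
proof -
  have "orth_states N B" "spans_proper N B" "\<And>u. u \<in> B \<Longrightarrow> product_across N {0} u"
    using assms(2) fully_product_imp_product_across by (auto simp: UPB_def)
  moreover have "0 < N"
    using assms(1) by simp
  ultimately obtain w where "w \<in> orth_compl N B" "product_across N {0} w"
    using orth_compl_has_product_across_first_qubit by metis
  then show ?thesis
    using bipartition_first_qubit[OF assms(1)] unfolding UPB_unext_all_bipartitions_def by blast
qed

section \<open>An unextendible entangled basis\<close>

definition ghz :: "nat \<Rightarrow> complex \<Rightarrow> nat set \<Rightarrow> nat set \<Rightarrow> complex" where
  "ghz N s x = (\<lambda>z. ket x z + s * ket ({0..<N} - x) z)"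

definition triad :: "nat \<Rightarrow> complex \<Rightarrow> complex \<Rightarrow> complex \<Rightarrow> nat set \<Rightarrow> complex" where
  "triad N p q r = (\<lambda>z. p * ket {0..<N} z + q * ket {1} z + r * ket ({0..<N} - {1}) z)"

definition ghz_labels :: "nat \<Rightarrow> nat set set" where
  "ghz_labels N = {x. x \<subseteq> {1..<N} \<and> x \<noteq> {} \<and> x \<noteq> {1}}"

text \<open>The complementary pairs \<open>{x, {0..<N} - x}\<close> with \<open>x \<in> ghz_labels N\<close> and the three
  points \<open>{0..<N}\<close>, \<open>{1}\<close>, \<open>{0..<N} - {1}\<close> of the triads partition the nonempty subsets of
  \<open>{0..<N}\<close>, so only \<open>ket {}\<close> is orthogonal to all of \<open>ueb_basis N\<close>. The triad coefficients
  are the rows of \<open>3\<close> times an orthogonal matrix without zero entries in its last two columns.\<close>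

definition ueb_basis :: "nat \<Rightarrow> (nat set \<Rightarrow> complex) set" where
  "ueb_basis N = {ghz N s x | s x. s \<in> {1, -1} \<and> x \<in> ghz_labels N}
                 \<union> {triad N 1 2 2, triad N 2 1 (-2), triad N 2 (-2) 1}"

lemma diff_eq_diff_imp_eq: "A - x = A - y \<Longrightarrow> x \<subseteq> A \<Longrightarrow> y \<subseteq> A \<Longrightarrow> x = y"
  by blast

lemma ghz_labelsD:
  assumes "x \<in> ghz_labels N"
  shows "x \<subseteq> {0..<N}" "0 \<notin> x" "0 \<in> {0..<N} - x" "x \<noteq> {1}" "{0..<N} - x \<noteq> {0..<N}"
    "{0..<N} - x \<noteq> {0..<N} - {1}"
proof -
  have x: "x \<subseteq> {1..<N}" "x \<noteq> {}" "x \<noteq> {1}"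
    using assms by (simp_all add: ghz_labels_def)
  obtain i where "i \<in> x"
    using x(2) by blast
  with x(1) have i: "i \<in> x" "1 \<le> i" "i < N"
    by auto
  show "x \<subseteq> {0..<N}" "0 \<notin> x"
    using x(1) by auto
  then show "0 \<in> {0..<N} - x"
    using i by simp
  show "x \<noteq> {1}"
    by (fact x(3))
  have "i \<in> {0..<N}" "i \<notin> {0..<N} - x"
    using i by simp_all
  then show "{0..<N} - x \<noteq> {0..<N}"
    by metis
  have "{1} \<subseteq> {0..<N}"
    using i by simp
  then show "{0..<N} - x \<noteq> {0..<N} - {1}"
    using diff_eq_diff_imp_eq \<open>x \<subseteq> {0..<N}\<close> x(3) by metis
qed

lemma ghz_labelsI:
  assumes "y \<subseteq> {0..<N}" "0 \<notin> y" "y \<noteq> {}" "y \<noteq> {1}"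
  shows "y \<in> ghz_labels N"
proof -
  have "y \<subseteq> {1..<N}"
  proof
    fix i assume "i \<in> y"
    then have "i \<noteq> 0" "i < N"
      using assms(1,2) by (metis, auto)
    then show "i \<in> {1..<N}"
      by simp
  qed
  with assms(3,4) show ?thesis
    by (simp add: ghz_labels_def)
qed

lemma nonempty_subset_cases:
  assumes "z \<subseteq> {0..<N}" "z \<noteq> {}"
  obtains "z = {0..<N}" | "z = {1}" | "z = {0..<N} - {1}"
    | x where "x \<in> ghz_labels N" "z = x \<or> z = {0..<N} - x"
proof (cases "0 \<in> z")
  case False
  then show ?thesis
    using that ghz_labelsI[OF assms(1) False assms(2)] by blast
next
  case True
  define x where "x = {0..<N} - z"
  have z: "z = {0..<N} - x"
    unfolding x_def by (rule double_diff[OF assms(1) order_refl, symmetric])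
  have "x \<subseteq> {0..<N}" "0 \<notin> x"
    using True by (simp_all add: x_def)
  then consider "x = {}" | "x = {1}" | "x \<in> ghz_labels N"
    using ghz_labelsI by blast
  then show ?thesis
    using that z by (cases; simp)
qed

lemma ghz_apply_label:
  assumes "x \<in> ghz_labels N"
  shows "ghz N s x x = 1" "ghz N s x ({0..<N} - x) = s"
proof -
  have "x \<noteq> {0..<N} - x"
    using ghz_labelsD(2,3)[OF assms] by metis
  then show "ghz N s x x = 1" "ghz N s x ({0..<N} - x) = s"
    by (simp_all add: ghz_def ket_def)
qed

lemma ghz_eq_0: "z \<noteq> x \<Longrightarrow> z \<noteq> {0..<N} - x \<Longrightarrow> ghz N s x z = 0"
  by (simp add: ghz_def ket_def)

lemma triad_eq_0: "z \<noteq> {0..<N} \<Longrightarrow> z \<noteq> {1} \<Longrightarrow> z \<noteq> {0..<N} - {1} \<Longrightarrow> triad N p q r z = 0"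
  by (simp add: triad_def ket_def)

lemma triad_points_distinct:
  fixes N :: nat
  assumes "2 \<le> N"
  shows "{0..<N} \<noteq> {1}" "{0..<N} \<noteq> {0..<N} - {1}" "{1} \<noteq> {0..<N} - {1}"
proof -
  have "0 \<in> {0..<N}" "1 \<in> {0..<N}"
    using assms by auto
  then show "{0..<N} \<noteq> {1}" "{0..<N} \<noteq> {0..<N} - {1}" "{1} \<noteq> {0..<N} - {1}"
    by (metis singletonD zero_neq_one, metis Diff_iff singletonI, metis Diff_iff singletonI)
qed

lemma triad_apply:
  fixes N :: nat
  assumes "2 \<le> N"
  shows "triad N p q r {0..<N} = p" "triad N p q r {1} = q" "triad N p q r ({0..<N} - {1}) = r"
  using triad_points_distinct[OF assms] by (simp_all add: triad_def ket_def)

lemma ghz_at_other_label: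
  assumes "x \<in> ghz_labels N" "x' \<in> ghz_labels N" "x \<noteq> x'"
  shows "ghz N s x' x = 0" "ghz N s x' ({0..<N} - x) = 0"
proof -
  note x = ghz_labelsD[OF assms(1)] and x' = ghz_labelsD[OF assms(2)]
  have "x \<noteq> {0..<N} - x'" "{0..<N} - x \<noteq> x'"
    using x(2,3) x'(2,3) by metis+
  moreover have "{0..<N} - x \<noteq> {0..<N} - x'"
    using diff_eq_diff_imp_eq x(1) x'(1) assms(3) by metis
  ultimately show "ghz N s x' x = 0" "ghz N s x' ({0..<N} - x) = 0"
    using assms(3) by (simp_all add: ghz_eq_0)
qed

lemma ghz_label_not_triad_point:
  assumes "x \<in> ghz_labels N" "z = x \<or> z = {0..<N} - x"
  shows "z \<noteq> {0..<N}" "z \<noteq> {1}" "z \<noteq> {0..<N} - {1}"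
proof -
  note x = ghz_labelsD[OF assms(1)]
  have "0 \<in> {0..<N}" "0 \<in> {0..<N} - {1}" "0 \<notin> {1::nat}"
    using x(3) by auto
  then show "z \<noteq> {0..<N}" "z \<noteq> {1}" "z \<noteq> {0..<N} - {1}"
    using assms(2) x by metis+
qed

lemma triad_at_ghz_label:
  assumes "x \<in> ghz_labels N"
  shows "triad N p q r x = 0" "triad N p q r ({0..<N} - x) = 0"
  using ghz_label_not_triad_point[OF assms] by (simp_all add: triad_eq_0)

lemma ghz_at_triad_points:
  assumes "x \<in> ghz_labels N"
  shows "ghz N s x {0..<N} = 0" "ghz N s x {1} = 0" "ghz N s x ({0..<N} - {1}) = 0"
  using ghz_label_not_triad_point[OF assms] by (metis ghz_eq_0)+

lemma ueb_basis_cases: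
  assumes "v \<in> ueb_basis N"
  obtains (ghz) s x where "s \<in> {1, -1}" "x \<in> ghz_labels N" "v = ghz N s x"
    | (triad) p q r where "(p, q, r) \<in> {(1, 2, 2), (2, 1, -2), (2, -2, 1)}" "v = triad N p q r"
  using assms unfolding ueb_basis_def by blast

lemma qvec_ueb_basis:
  assumes "2 \<le> N" "v \<in> ueb_basis N"
  shows "qvec N v"
  using assms(2)
proof (cases rule: ueb_basis_cases)
  case (ghz s x)
  show ?thesis
    unfolding ghz(3) ghz_def
    by (intro qvec_add qvec_scale qvec_ket ghz_labelsD(1)[OF ghz(2)] Diff_subset)
next
  case (triad p q r)
  have "{1} \<subseteq> {0..<N}"
    using assms(1) by simp
  then show ?thesis
    unfolding triad(2) triad_def by (intro qvec_add qvec_scale qvec_ket order_refl Diff_subset)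
qed

lemma ueb_basis_at_empty:
  assumes "2 \<le> N" "v \<in> ueb_basis N"
  shows "v {} = 0"
  using assms(2)
proof (cases rule: ueb_basis_cases)
  case (ghz s x)
  have "x \<noteq> {}"
    using ghz(2) by (simp add: ghz_labels_def)
  moreover have "{0..<N} - x \<noteq> {}"
    using ghz_labelsD(3)[OF ghz(2)] by (metis empty_iff)
  ultimately show ?thesis
    unfolding ghz(3) by (intro ghz_eq_0) (metis, metis)
next
  case (triad p q r)
  have "0 \<in> {0..<N}" "0 \<in> {0..<N} - {1}"
    using assms(1) by simp_all
  then have "{} \<noteq> {0..<N}" "{} \<noteq> {0..<N} - {1}"
    by (metis empty_iff)+
  then show ?thesis
    unfolding triad(2) by (intro triad_eq_0) simp_all
qed

lemma GME_ueb_basis: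
  assumes "2 \<le> N" "v \<in> ueb_basis N"
  shows "GME N v"
  using assms(2)
proof (cases rule: ueb_basis_cases)
  case (ghz s x)
  show ?thesis
  proof (rule GME_if_antipodal_support[of N v x "{}"])
    show "qvec N v"
      by (rule qvec_ueb_basis[OF assms])
    show "x \<subseteq> {0..<N}"
      by (rule ghz_labelsD(1)[OF ghz(2)])
    show "v x \<noteq> 0" "v ({0..<N} - x) \<noteq> 0"
      using ghz by (auto simp: ghz_apply_label)
    show "v y = 0" if "y \<noteq> x" "y \<noteq> {0..<N} - x" for y
      using that ghz(3) by (simp add: ghz_eq_0)
  qed
next
  case (triad p q r)
  show ?thesis
  proof (rule GME_if_antipodal_support[of N v "{1}" "{0..<N}"])
    show "qvec N v"
      by (rule qvec_ueb_basis[OF assms])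
    show "{1} \<subseteq> {0..<N}"
      using assms(1) by simp
    show "v {1} \<noteq> 0" "v ({0..<N} - {1}) \<noteq> 0"
      using triad triad_apply[OF assms(1), of p q r] by auto
    show "v y = 0" if "y \<noteq> {1}" "y \<noteq> {0..<N} - {1}" "y \<noteq> {0..<N}" for y
      using that triad(2) by (simp add: triad_eq_0)
  qed
qed

lemma qinner_ghz:
  assumes "x \<subseteq> {0..<N}"
  shows "qinner N (ghz N s x) w = w x + cnj s * w ({0..<N} - x)"
proof -
  have "qinner N (ghz N s x) w = qinner N (ket x) w + cnj s * qinner N (ket ({0..<N} - x)) w"
    by (simp add: ghz_def qinner_eq_inner_on inner_on_add_left inner_on_scale_left)
  with assms show ?thesis
    by (simp add: qinner_ket)
qed

lemma qinner_triad:
  fixes N :: nat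
  assumes "2 \<le> N"
  shows "qinner N (triad N p q r) w = cnj p * w {0..<N} + cnj q * w {1} + cnj r * w ({0..<N} - {1})"
proof -
  have "qinner N (triad N p q r) w
      = cnj p * qinner N (ket {0..<N}) w + cnj q * qinner N (ket {1}) w
        + cnj r * qinner N (ket ({0..<N} - {1})) w"
    by (simp add: triad_def qinner_eq_inner_on inner_on_add_left inner_on_scale_left)
  moreover have "{1} \<subseteq> {0..<N}"
    using assms by simp
  ultimately show ?thesis
    by (simp add: qinner_ket)
qed

lemma qinner_ghz_ueb_basis:
  assumes "s \<in> {1, -1}" "x \<in> ghz_labels N" "v \<in> ueb_basis N" "ghz N s x \<noteq> v"
  shows "qinner N (ghz N s x) v = 0"
proof -
  have eval: "qinner N (ghz N s x) v = v x + cnj s * v ({0..<N} - x)"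
    by (rule qinner_ghz[OF ghz_labelsD(1)[OF assms(2)]])
  from assms(3) show ?thesis
  proof (cases rule: ueb_basis_cases)
    case (ghz s' x')
    show ?thesis
    proof (cases "x' = x")
      case True
      then have "1 + cnj s * s' = 0"
        using ghz assms(1,4) by auto
      then show ?thesis
        using eval ghz(3) True ghz_apply_label[OF assms(2)] by simp
    next
      case False
      then show ?thesis
        using eval ghz(3) ghz_at_other_label[OF assms(2) ghz(2) not_sym[OF False]] by simp
    qed
  next
    case (triad p q r)
    then show ?thesis
      using eval triad_at_ghz_label[OF assms(2)] by simp
  qed
qed

lemma qinner_triad_ueb_basis:
  assumes "2 \<le> N" "(p, q, r) \<in> {(1, 2, 2), (2, 1, -2), (2, -2, 1)}" "v \<in> ueb_basis N"
    and "triad N p q r \<noteq> v"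
  shows "qinner N (triad N p q r) v = 0"
  using assms(3)
proof (cases rule: ueb_basis_cases)
  case (ghz s x)
  then show ?thesis
    using qinner_triad[OF assms(1)] ghz_at_triad_points[OF ghz(2)] by simp
next
  case (triad p' q' r')
  then show ?thesis
    using qinner_triad[OF assms(1)] assms(2,4) triad_apply[OF assms(1), of p' q' r'] by auto
qed

lemma orth_states_ueb_basis:
  assumes "2 \<le> N"
  shows "orth_states N (ueb_basis N)"
  unfolding orth_states_def
proof (intro conjI ballI impI)
  fix v assume "v \<in> ueb_basis N"
  then show "qstate N v"
    using GME_ueb_basis[OF assms] by (simp add: GME_def)
next
  fix u v assume u: "u \<in> ueb_basis N" and v: "v \<in> ueb_basis N" and "u \<noteq> v"
  from u show "qinner N u v = 0"
  proof (cases rule: ueb_basis_cases)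
    case (ghz s x)
    then show ?thesis
      using qinner_ghz_ueb_basis[OF _ _ v] \<open>u \<noteq> v\<close> by simp
  next
    case (triad p q r)
    then show ?thesis
      using qinner_triad_ueb_basis[OF assms _ v] \<open>u \<noteq> v\<close> by simp
  qed
qed

lemma orth_compl_ueb_basis_vanishes:
  assumes "2 \<le> N" "w \<in> orth_compl N (ueb_basis N)" "z \<noteq> {}"
  shows "w z = 0"
proof -
  have orth: "qinner N v w = 0" if "v \<in> ueb_basis N" for v
    using assms(2) that by (simp add: orth_compl_def)
  have ghz_pair: "w x = 0" "w ({0..<N} - x) = 0" if "x \<in> ghz_labels N" for x
  proof -
    have "ghz N 1 x \<in> ueb_basis N" "ghz N (-1) x \<in> ueb_basis N"
      using that by (auto simp: ueb_basis_def)
    then have "qinner N (ghz N 1 x) w = 0" "qinner N (ghz N (-1) x) w = 0"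
      using orth by simp_all
    then have "w x + w ({0..<N} - x) = 0" "w x - w ({0..<N} - x) = 0"
      using qinner_ghz[OF ghz_labelsD(1)[OF that]] by simp_all
    then show "w x = 0" "w ({0..<N} - x) = 0"
      by algebra+
  qed
  have "triad N 1 2 2 \<in> ueb_basis N" "triad N 2 1 (-2) \<in> ueb_basis N" "triad N 2 (-2) 1 \<in> ueb_basis N"
    by (simp_all add: ueb_basis_def)
  then have "qinner N (triad N 1 2 2) w = 0" "qinner N (triad N 2 1 (-2)) w = 0"
    "qinner N (triad N 2 (-2) 1) w = 0"
    using orth by simp_all
  then have "w {0..<N} + 2 * w {1} + 2 * w ({0..<N} - {1}) = 0"
    "2 * w {0..<N} + w {1} - 2 * w ({0..<N} - {1}) = 0"
    "2 * w {0..<N} - 2 * w {1} + w ({0..<N} - {1}) = 0"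
    by (simp_all add: qinner_triad[OF assms(1)])
  then have triad_points: "w {0..<N} = 0" "w {1} = 0" "w ({0..<N} - {1}) = 0"
    by algebra+
  show ?thesis
  proof (cases "z \<subseteq> {0..<N}")
    case True
    then show ?thesis
      using ghz_pair triad_points by (cases rule: nonempty_subset_cases[OF True assms(3)]) auto
  next
    case False
    then show ?thesis
      using assms(2) by (simp add: orth_compl_def qvec_def)
  qed
qed

lemma spans_proper_ueb_basis:
  assumes "2 \<le> N"
  shows "spans_proper N (ueb_basis N)"
proof -
  have "ket {} \<notin> qspan (ueb_basis N)"
  proof
    assume "ket {} \<in> qspan (ueb_basis N)"
    then obtain F c where "F \<subseteq> ueb_basis N" "ket {} = (\<lambda>x. \<Sum>b\<in>F. c b * b x)"
      by (auto simp: qspan_def)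
    then have "ket {} {} = 0"
      using ueb_basis_at_empty[OF assms] by (auto intro!: sum.neutral)
    then show False
      by (simp add: ket_def)
  qed
  then show ?thesis
    using qvec_ket[of "{}" N] by (auto simp: spans_proper_def)
qed

lemma ueb_basis_properties:
  assumes "2 \<le> N"
  shows "UEB N (ueb_basis N)" "\<forall>v\<in>ueb_basis N. GME N v"
    "UEB_conserved_all_bipartitions N (ueb_basis N)"
proof -
  have vanishes: "\<And>z. z \<noteq> {} \<Longrightarrow> w z = 0" if "w \<in> orth_compl N (ueb_basis N)" for w
    using orth_compl_ueb_basis_vanishes[OF assms that] by blast
  show GME: "\<forall>v\<in>ueb_basis N. GME N v"
    using GME_ueb_basis[OF assms] by blast
  have "\<not> entangled N w" if "w \<in> orth_compl N (ueb_basis N)" for w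
    using fully_product_if_vanishes_off_empty[OF _ _ vanishes[OF that]] assms
    by (auto simp: entangled_def)
  then show "UEB N (ueb_basis N)"
    unfolding UEB_def using orth_states_ueb_basis[OF assms] GME GME_imp_entangled[OF assms]
      spans_proper_ueb_basis[OF assms] by blast
  show "UEB_conserved_all_bipartitions N (ueb_basis N)"
    unfolding UEB_conserved_all_bipartitions_def entangled_across_def
    using product_across_if_vanishes_off_empty vanishes by blast
qed

theorem proposition4:
  shows "(\<forall>N::nat. N \<ge> 2 \<longrightarrow> \<not> (\<exists>B. UPB N B \<and> UPB_unext_all_bipartitions N B))
       \<and> (\<forall>N::nat. N \<ge> 3 \<longrightarrow> (\<exists>B. UEB N B \<and> (\<forall>v\<in>B. GME N v) \<and> UEB_conserved_all_bipartitions N B))"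
proof (intro conjI allI impI)
  fix N :: nat
  assume "N \<ge> 2"
  then show "\<not> (\<exists>B. UPB N B \<and> UPB_unext_all_bipartitions N B)"
    using UPB_not_unext_all_bipartitions by blast
next
  fix N :: nat
  assume "N \<ge> 3"
  then have "N \<ge> 2"
    by simp
  then show "\<exists>B. UEB N B \<and> (\<forall>v\<in>B. GME N v) \<and> UEB_conserved_all_bipartitions N B"
    using ueb_basis_properties by blast
qed

end
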